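(* Let $\alpha\in(0,1)$ be irrational with denominators $(q_n)$, and let $M_n=\lfloor (q_n-1)/2\rfloor$. Then $$P_{q_n}(\alpha)=\Theta\left(c_n\exp\Big(-2c_n\sum_{t=1}^{M_n-1}\frac{D_t(\alpha_n^-)}{t(t+1)}\Big)\right)\quad\text{as } n\to\infty.$$ That is, there are constants $0<c\le C$, independent of $n$, such that for all sufficiently large $n$ the quantity $P_{q_n}(\alpha)$ lies between $c$ and $C$ times the expression inside $\Theta$.
   Context: For real $\alpha$ and $N\in\mathbb N$ let $P_N(\alpha)=\prod_{r=1}^N|2\sin(\pi r\alpha)|$. Write $\alpha=[0;a_1,a_2,\ldots]$. Its convergents $p_n/q_n$ are indexed by $q_0=0$, $q_1=1$, $q_{n+1}=a_nq_n+q_{n-1}$ and $p_0=1$, $p_1=0$, $p_{n+1}=a_np_n+p_{n-1}$. Define $\alpha_n^+=[a_n;a_{n+1},a_{n+2},\ldots]$ and $\alpha_n^-=[0;a_{n-1},a_{n-2},\ldots,a_1]$; one has $\alpha_n^-=q_{n-1}/q_n$. Define $c_n=1/(\alpha_n^++\alpha_n^-)$. For real $\beta$ and $t\in\mathbb N$ let $D_t(\beta)=\sum_{s=1}^t\left(\{\beta s\}-\tfrac12\right)$, where $\{x\}$ denotes the fractional part of $x$. *)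

theory Defs
  imports Complex_Main
begin

definition P_prod :: "nat \<Rightarrow> real \<Rightarrow> real" where
  "P_prod N \<alpha> = (\<Prod>r=1..N. \<bar>2 * sin (pi * real r * \<alpha>)\<bar>)"

definition D_sum :: "nat \<Rightarrow> real \<Rightarrow> real" where
  "D_sum t \<beta> = (\<Sum>s=1..t. frac (\<beta> * real s) - 1/2)"

text \<open>Gauss map; (gauss ^^ (k-1)) alpha = [0; a_k, a_(k+1), ...].\<close>
definition gauss :: "real \<Rightarrow> real" where
  "gauss x = frac (1 / x)"

text \<open>Partial quotient a_k of alpha = [0; a_1, a_2, ...], for k >= 1.\<close>
definition cf_a :: "real \<Rightarrow> nat \<Rightarrow> nat" where
  "cf_a \<alpha> k = nat \<lfloor>1 / (gauss ^^ (k - 1)) \<alpha>\<rfloor>"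

fun cf_q :: "real \<Rightarrow> nat \<Rightarrow> nat" where
  "cf_q \<alpha> 0 = 0"
| "cf_q \<alpha> (Suc 0) = 1"
| "cf_q \<alpha> (Suc (Suc n)) = cf_a \<alpha> (Suc n) * cf_q \<alpha> (Suc n) + cf_q \<alpha> n"

fun fin_cf :: "nat list \<Rightarrow> real" where
  "fin_cf [] = 0"
| "fin_cf (b # bs) = 1 / (real b + fin_cf bs)"

text \<open>alpha_n^+ = [a_n; a_(n+1), ...] (n >= 1).\<close>
definition alpha_plus :: "real \<Rightarrow> nat \<Rightarrow> real" where
  "alpha_plus \<alpha> n = 1 / (gauss ^^ (n - 1)) \<alpha>"

definition alpha_minus :: "real \<Rightarrow> nat \<Rightarrow> real" where
  "alpha_minus \<alpha> n = fin_cf (rev (map (cf_a \<alpha>) [1..<n]))"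

definition cf_c :: "real \<Rightarrow> nat \<Rightarrow> real" where
  "cf_c \<alpha> n = 1 / (alpha_plus \<alpha> n + alpha_minus \<alpha> n)"

definition M_idx :: "real \<Rightarrow> nat \<Rightarrow> nat" where
  "M_idx \<alpha> n = (cf_q \<alpha> n - 1) div 2"

end

(*
  Write alpha = (p A + p') / (q A + q') with q = q_n, q' = q_(n-1) and A = alpha_n^+, so that
  q alpha - p = -e c / q with e = +-1 and c = c_n.  If r p = k (mod q), then r alpha is, modulo 1,
  the point y_k = k/q + h_k with |h_k| <= 1/q, while the factor r = q contributes 2 sin (pi c / q),
  which is about c / q.  Expanding ln (2 sin (pi x)) to second order at the points k/q and using
  prod_(0<k<q) 2 sin (pi k / q) = q, the quadratic errors add up to O(sum 1/k^2) = O(1) and the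
  linear term is -(c/q) sum_k pi cot (pi k / q) w_k with w_k = {k alpha_n^-} - 1/2.  Replacing
  pi cot (pi x) by 1/x - 1/(1-x) and summing by parts turns it into
  -2c sum_t D_t(alpha_n^-) / (t (t+1)), and the terms with t >= M_n contribute only O(1).
*)
theory Submission
  imports Defs "HOL-Analysis.Analysis" "HOL-Computational_Algebra.Fundamental_Theorem_Algebra"
begin

section \<open>Trigonometric estimates\<close>

lemma norm_one_minus_cis: "cmod (1 - cis t) = 2 * \<bar>sin (t / 2)\<bar>"
proof -
  have "(cmod (1 - cis t))\<^sup>2 = (1 - cos t)\<^sup>2 + (sin t)\<^sup>2"
    by (simp add: cmod_power2)
  also have "\<dots> = 2 - 2 * cos t"
    using sin_cos_squared_add[of t] by (simp add: power2_eq_square algebra_simps)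
  also have "\<dots> = (2 * \<bar>sin (t / 2)\<bar>)\<^sup>2"
    using cos_double_sin[of "t/2"] by (simp add: power2_eq_square)
  finally show ?thesis
    by (metis abs_ge_zero mult_nonneg_nonneg norm_ge_zero power2_eq_iff_nonneg zero_le_numeral)
qed

lemma prod_one_minus_roots_of_unity:
  assumes "1 \<le> q"
  shows "(\<Prod>j\<in>{1..<q}. 1 - cis (2 * pi * real j / real q)) = of_nat q"
proof -
  define \<omega> where "\<omega> = (\<lambda>j. cis (2 * pi * real j / real q))"
  define P :: "complex poly" where "P = [:-1:] + monom 1 q"
  have poly_P: "poly P z = z ^ q - 1" for z
    by (simp add: P_def poly_monom)
  have lead_P: "lead_coeff P = 1"
    using assms unfolding P_def by (subst lead_coeff_add_le) (auto simp: degree_monom_eq)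
  have "rsquarefree P"
  proof (subst rsquarefree_roots, intro allI notI)
    fix z assume "poly P z = 0 \<and> poly (pderiv P) z = 0"
    moreover have "pderiv P = monom (of_nat q) (q - 1)"
      by (simp add: P_def pderiv_add pderiv_monom pderiv_pCons)
    ultimately show False
      using assms by (auto simp: poly_P poly_monom power_0_left)
  qed
  then have "(\<Prod>z | poly P z = 0. [:-z, 1:]) = P"
    using complex_poly_decompose_rsquarefree[of P] lead_P by simp
  moreover have "bij_betw \<omega> {..<q} {z. poly P z = 0}"
    using Complex.bij_betw_roots_unity[of q] assms by (simp add: poly_P \<omega>_def)
  ultimately have "(\<Prod>j<q. [:-\<omega> j, 1:]) = P"
    using prod.reindex_bij_betw[of \<omega> "{..<q}" _ "\<lambda>z. [:-z, 1:]"] by simp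
  moreover have "{..<q} = insert 0 {1..<q}"
    using assms by auto
  ultimately have "[:-1, 1:] * (\<Prod>j\<in>{1..<q}. [:-\<omega> j, 1:]) = P"
    by (simp add: \<omega>_def)
  moreover have "[:-1, 1:] * (\<Sum>j<q. monom 1 j) = P"
    by (rule poly_eq_poly_eq_iff[THEN iffD1], rule ext)
       (simp add: poly_P poly_sum poly_monom power_diff_1_eq algebra_simps)
  ultimately have "(\<Prod>j\<in>{1..<q}. [:-\<omega> j, 1:]) = (\<Sum>j<q. monom 1 j)"
    by (metis mult_cancel_left pCons_eq_0_iff zero_neq_one)
  from arg_cong[OF this, of "\<lambda>f. poly f 1"] show ?thesis
    by (simp add: poly_sum poly_monom poly_prod \<omega>_def)
qed

lemma prod_2_sin_pi_div:
  assumes "1 \<le> q"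
  shows "(\<Prod>k\<in>{1..<q}. 2 * sin (pi * real k / real q)) = real q"
proof -
  have "2 * sin (pi * real k / real q) = cmod (1 - cis (2 * pi * real k / real q))"
    if "k \<in> {1..<q}" for k
  proof -
    have "0 < sin (pi * real k / real q)"
      using that by (intro sin_gt_zero) (auto simp: field_simps)
    then show ?thesis
      by (simp add: norm_one_minus_cis)
  qed
  then have "(\<Prod>k\<in>{1..<q}. 2 * sin (pi * real k / real q))
      = cmod (\<Prod>k\<in>{1..<q}. 1 - cis (2 * pi * real k / real q))"
    by (simp add: prod_norm)
  also have "\<dots> = real q"
    by (simp only: prod_one_minus_roots_of_unity[OF assms] norm_of_nat)
  finally show ?thesis .
qed

lemma abs_sin_add_pi_nat: "\<bar>sin (x + pi * real n)\<bar> = \<bar>sin x\<bar>"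
  by (simp add: sin_add abs_mult)

lemma jordan_inequality:
  assumes "0 \<le> t" "t \<le> pi / 2"
  shows "2 * t / pi \<le> sin t"
proof -
  have "concave_on {0..pi/2} sin"
    by (rule f''_le0_imp_concave[where f'=cos and f''="\<lambda>x. - sin x"])
       (auto intro!: derivative_eq_intros sin_ge_zero)
  moreover have "0 \<le> 2 * t / pi" "2 * t / pi \<le> 1"
    using assms by (auto simp: field_simps)
  ultimately show ?thesis
    using concave_onD[of "{0..pi/2}" sin "2 * t / pi" 0 "pi/2"] by simp
qed

lemma sin_pi_ge:
  assumes "0 \<le> m" "m \<le> z" "z \<le> 1 - m"
  shows "2 * m \<le> sin (pi * z)"
proof (cases "z \<le> 1/2")
  case True
  then have "2 * (pi * z) / pi \<le> sin (pi * z)"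
    using assms by (intro jordan_inequality) auto
  then show ?thesis
    using assms by simp
next
  case False
  then have "2 * (1 - z) \<le> sin (pi * (1 - z))"
    using jordan_inequality[of "pi * (1 - z)"] assms by simp
  then show ?thesis
    using assms by (simp add: right_diff_distrib)
qed

lemma abs_mult_cos_minus_sin_le:
  fixes t :: real
  assumes "0 \<le> t"
  shows "\<bar>t * cos t - sin t\<bar> \<le> t ^ 3"
proof -
  have "norm ((t * cos t - sin t) - (0 * cos 0 - sin 0)) \<le> t\<^sup>2 * norm (t - 0)"
  proof (rule field_differentiable_bound[where S = "{0..t}" and f' = "\<lambda>v. - v * sin v"])
    fix v :: real assume v: "v \<in> {0..t}"
    show "((\<lambda>v. v * cos v - sin v) has_field_derivative - v * sin v) (at v within {0..t})"
      by (auto intro!: derivative_eq_intros)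
    have "\<bar>v\<bar> * \<bar>sin v\<bar> \<le> t * t"
      using v abs_sin_x_le_abs_x[of v] by (intro mult_mono) auto
    then show "norm (- v * sin v) \<le> t\<^sup>2"
      by (simp add: abs_mult power2_eq_square)
  qed (use assms in auto)
  then show ?thesis
    using assms by (simp add: power3_eq_cube power2_eq_square)
qed

lemma pi_cot_minus_inverse_bound:
  assumes "0 < x" "x \<le> 1/2"
  shows "\<bar>pi * cot (pi * x) - 1 / x\<bar> \<le> 16"
proof -
  define t where "t = pi * x"
  have t: "0 < t" "t \<le> pi / 2"
    using assms by (auto simp: t_def)
  have sin_t: "2 * x \<le> sin t"
    using jordan_inequality[of t] t by (simp add: t_def)
  have "\<bar>pi * cot t - 1 / x\<bar> = pi * \<bar>t * cos t - sin t\<bar> / (t * sin t)"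
    using sin_t assms by (simp add: t_def cot_def abs_divide abs_mult field_simps)
  also have "\<dots> \<le> pi * t ^ 3 / (t * (2 * x))"
    using sin_t t assms abs_mult_cos_minus_sin_le[of t]
    by (intro frac_le mult_left_mono mult_pos_pos) auto
  also have "\<dots> = pi ^ 3 * x / 2"
    using assms by (simp add: t_def power3_eq_cube)
  also have "\<dots> \<le> 4 ^ 3 * (1/2) / 2"
    using assms pi_less_4 by (intro divide_right_mono mult_mono power_mono) auto
  finally show ?thesis
    by (simp add: t_def)
qed

lemma cot_pi_minus: "cot (pi - x) = - cot x"
  by (simp add: cot_def)

lemma pi_cot_approx:
  assumes "0 < x" "x < 1"
  shows "\<bar>pi * cot (pi * x) - 1 / x + 1 / (1 - x)\<bar> \<le> 18"
proof (cases "x \<le> 1/2")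
  case True
  have "0 \<le> 1 / (1 - x)" "1 / (1 - x) \<le> 2"
    using assms True by (auto simp: field_simps)
  then show ?thesis
    using pi_cot_minus_inverse_bound[of x] assms True by linarith
next
  case False
  have "0 \<le> 1 / x" "1 / x \<le> 2"
    using assms False by (auto simp: field_simps)
  moreover have "cot (pi * x) = - cot (pi * (1 - x))"
    by (simp add: right_diff_distrib cot_pi_minus)
  ultimately show ?thesis
    using pi_cot_minus_inverse_bound[of "1 - x"] assms False by (simp only: abs_le_iff) linarith
qed

definition log_sin :: "real \<Rightarrow> real" where
  "log_sin x = ln (2 * sin (pi * x))"

lemma has_real_derivative_log_sin:
  assumes "0 < sin (pi * x)"
  shows "(log_sin has_real_derivative pi * cot (pi * x)) (at x)"
  unfolding log_sin_def cot_def using assms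
  by (auto intro!: derivative_eq_intros)

lemma has_real_derivative_pi_cot:
  assumes "sin (pi * x) \<noteq> 0"
  shows "((\<lambda>v. pi * cot (pi * v)) has_real_derivative - (pi / sin (pi * x))\<^sup>2) (at x)"
proof -
  have "((\<lambda>v. pi * cot (pi * v)) has_real_derivative pi * (- inverse ((sin (pi * x))\<^sup>2) * pi)) (at x)"
    using assms by (auto intro!: derivative_eq_intros DERIV_chain2[OF DERIV_cot])
  moreover have "pi * (- inverse ((sin (pi * x))\<^sup>2) * pi) = - (pi / sin (pi * x))\<^sup>2"
    using assms by (simp add: power_divide field_simps power2_eq_square)
  ultimately show ?thesis
    by simp
qed

lemma pi_cot_lipschitz:
  assumes "0 < m" "x \<in> {m..1-m}" "v \<in> {m..1-m}"
  shows "\<bar>pi * cot (pi * v) - pi * cot (pi * x)\<bar> \<le> pi\<^sup>2 / (4 * m\<^sup>2) * \<bar>v - x\<bar>"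
proof -
  have "norm (pi * cot (pi * v) - pi * cot (pi * x)) \<le> pi\<^sup>2 / (4 * m\<^sup>2) * norm (v - x)"
  proof (rule field_differentiable_bound[where S = "{m..1-m}" and f' = "\<lambda>v. - (pi / sin (pi * v))\<^sup>2"])
    fix z assume z: "z \<in> {m..1-m}"
    then have sin_z: "2 * m \<le> sin (pi * z)"
      using sin_pi_ge assms(1) by auto
    then show "((\<lambda>v. pi * cot (pi * v)) has_field_derivative - (pi / sin (pi * z))\<^sup>2) (at z within {m..1-m})"
      using assms(1) by (intro has_field_derivative_at_within[OF has_real_derivative_pi_cot]) auto
    have "pi / sin (pi * z) \<le> pi / (2 * m)"
      using sin_z assms(1) by (intro divide_left_mono) auto
    then have "(pi / sin (pi * z))\<^sup>2 \<le> (pi / (2 * m))\<^sup>2"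
      using sin_z assms(1) by (intro power_mono) auto
    then show "norm (- (pi / sin (pi * z))\<^sup>2) \<le> pi\<^sup>2 / (4 * m\<^sup>2)"
      by (simp add: power_divide power_mult_distrib)
  qed (use assms in auto)
  then show ?thesis
    by simp
qed

lemma log_sin_taylor:
  assumes "0 < m" "x \<in> {m..1-m}" "y \<in> {m..1-m}"
  shows "\<bar>log_sin y - log_sin x - pi * cot (pi * x) * (y - x)\<bar> \<le> pi\<^sup>2 / (4 * m\<^sup>2) * (y - x)\<^sup>2"
proof -
  define B where "B = pi\<^sup>2 / (4 * m\<^sup>2)"
  define I where "I = {min x y..max x y}"
  have "norm ((log_sin y - pi * cot (pi * x) * y) - (log_sin x - pi * cot (pi * x) * x))
      \<le> (B * \<bar>y - x\<bar>) * norm (y - x)"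
  proof (rule field_differentiable_bound[where S = I and f' = "\<lambda>v. pi * cot (pi * v) - pi * cot (pi * x)"])
    fix v assume "v \<in> I"
    then have v: "v \<in> {m..1-m}" "\<bar>v - x\<bar> \<le> \<bar>y - x\<bar>"
      using assms by (auto simp: I_def)
    have "(log_sin has_real_derivative pi * cot (pi * v)) (at v)"
      using sin_pi_ge[of m v] v(1) assms(1) by (intro has_real_derivative_log_sin) auto
    from DERIV_diff[OF this DERIV_cmult[OF DERIV_ident, of "pi * cot (pi * x)"]]
    show "((\<lambda>v. log_sin v - pi * cot (pi * x) * v) has_field_derivative pi * cot (pi * v) - pi * cot (pi * x))
        (at v within I)"
      by (simp add: has_field_derivative_at_within)
    have "0 \<le> B"
      by (simp add: B_def)
    then show "norm (pi * cot (pi * v) - pi * cot (pi * x)) \<le> B * \<bar>y - x\<bar>"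
      using pi_cot_lipschitz[OF assms(1,2) v(1)] mult_left_mono[OF v(2), of B] by (simp add: B_def)
  qed (auto simp: I_def)
  moreover have "(log_sin y - pi * cot (pi * x) * y) - (log_sin x - pi * cot (pi * x) * x)
      = log_sin y - log_sin x - pi * cot (pi * x) * (y - x)"
    by (simp add: algebra_simps)
  moreover have "(B * \<bar>y - x\<bar>) * norm (y - x) = pi\<^sup>2 / (4 * m\<^sup>2) * (y - x)\<^sup>2"
    by (simp add: B_def mult.assoc abs_mult_self_eq power2_eq_square)
  ultimately show ?thesis
    by simp
qed

section \<open>Finite sums\<close>

lemma sum_reflect:
  fixes g :: "nat \<Rightarrow> 'a::comm_monoid_add"
  shows "(\<Sum>k\<in>{1..<q}. g (q - k)) = (\<Sum>k\<in>{1..<q}. g k)"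
  by (rule sum.reindex_bij_witness[where i = "\<lambda>k. q - k" and j = "\<lambda>k. q - k"]) auto

lemma sum_inverse_squares_le: "(\<Sum>k\<in>{1..<n}. 1 / (real k)\<^sup>2) \<le> 2"
proof (cases "n = 0")
  case False
  have bound: "(\<Sum>k=1..m. 1 / (real k)\<^sup>2) \<le> 2 - 1 / real m" if "1 \<le> m" for m
    using that
  proof (induction m rule: dec_induct)
    case (step m)
    have "1 / (real (Suc m))\<^sup>2 \<le> 1 / (real m * real (Suc m))"
      using step.hyps by (intro divide_left_mono) (auto simp: power2_eq_square)
    also have "\<dots> = 1 / real m - 1 / real (Suc m)"
      using step.hyps by (simp add: field_simps)
    finally show ?case
      using step.IH by simp
  qed simp
  have "(\<Sum>k\<in>{1..<n}. 1 / (real k)\<^sup>2) \<le> (\<Sum>k=1..n. 1 / (real k)\<^sup>2)"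
    by (intro sum_mono2) auto
  also have "\<dots> \<le> 2 - 1 / real n"
    using False by (intro bound) simp
  also have "\<dots> \<le> 2"
    by simp
  finally show ?thesis .
qed simp

lemma sum_divide_by_parts:
  fixes w :: "nat \<Rightarrow> real"
  shows "(\<Sum>k=1..N. w k / real k)
       = (\<Sum>t=1..<N. (\<Sum>s=1..t. w s) / (real t * (real t + 1))) + (\<Sum>s=1..N. w s) / real N"
proof (induction N)
  case (Suc N)
  show ?case
  proof (cases "N = 0")
    case False
    have "(\<Sum>s=1..N. w s) / real N
        = (\<Sum>s=1..N. w s) / (real N * (real N + 1)) + (\<Sum>s=1..N. w s) / (real N + 1)"
      using False by (simp add: divide_simps) (simp add: algebra_simps)
    then show ?thesis
      using Suc.IH False by (simp add: add_divide_distrib)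
  qed simp
qed simp

lemma sum_log_sin_grid:
  assumes "1 \<le> q"
  shows "(\<Sum>k\<in>{1..<q}. log_sin (real k / real q)) = ln (real q)"
proof -
  have pos: "0 < 2 * sin (pi * real k / real q)" if "k \<in> {1..<q}" for k
    using that by (auto intro!: sin_gt_zero simp: field_simps)
  have "ln (real q) = ln (\<Prod>k\<in>{1..<q}. 2 * sin (pi * real k / real q))"
    using prod_2_sin_pi_div[OF assms] by simp
  also have "\<dots> = (\<Sum>k\<in>{1..<q}. ln (2 * sin (pi * real k / real q)))"
    using pos by (intro ln_prod) (auto simp: less_imp_neq[symmetric])
  finally show ?thesis
    by (simp add: log_sin_def)
qed

lemma sum_cot_grid: "(\<Sum>k\<in>{1..<q}. cot (pi * real k / real q)) = 0"
proof -
  have "(\<Sum>k\<in>{1..<q}. cot (pi * real k / real q)) = (\<Sum>k\<in>{1..<q}. cot (pi * real (q - k) / real q))"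
    by (rule sum_reflect[symmetric])
  also have "\<dots> = (\<Sum>k\<in>{1..<q}. - cot (pi * real k / real q))"
  proof (rule sum.cong[OF refl])
    fix k assume "k \<in> {1..<q}"
    then have "pi * real (q - k) / real q = pi - pi * real k / real q"
      by (simp add: of_nat_diff field_simps)
    then show "cot (pi * real (q - k) / real q) = - cot (pi * real k / real q)"
      by (simp add: cot_pi_minus)
  qed
  finally show ?thesis
    by (simp add: sum_negf)
qed

lemma abs_D_sum_le: "\<bar>D_sum t \<beta>\<bar> \<le> real t / 2"
proof -
  have "\<bar>frac (\<beta> * real s) - 1 / 2\<bar> \<le> 1 / 2" for s
    unfolding abs_le_iff using frac_ge_0[of "\<beta> * real s"] frac_lt_1[of "\<beta> * real s"] by linarith
  then have "\<bar>D_sum t \<beta>\<bar> \<le> (\<Sum>s=1..t. 1 / 2)"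
    unfolding D_sum_def by (intro order.trans[OF sum_abs] sum_mono)
  then show ?thesis
    by simp
qed

lemma abs_sum_D_sum_tail_le:
  assumes "1 \<le> M"
  shows "\<bar>\<Sum>t\<in>{M..<N}. D_sum t \<beta> / (real t * (real t + 1))\<bar> \<le> real (N - M) / (2 * (real M + 1))"
proof -
  have "\<bar>D_sum t \<beta> / (real t * (real t + 1))\<bar> \<le> 1 / (2 * (real M + 1))" if "t \<in> {M..<N}" for t
  proof -
    have t: "1 \<le> real t" "real M \<le> real t"
      using that assms by auto
    have "\<bar>D_sum t \<beta> / (real t * (real t + 1))\<bar> = \<bar>D_sum t \<beta>\<bar> / (real t * (real t + 1))"
      using t by (simp add: abs_divide abs_mult)
    also have "\<dots> \<le> (real t / 2) / (real t * (real t + 1))"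
      using t abs_D_sum_le[of t \<beta>] by (intro divide_right_mono) auto
    also have "\<dots> = 1 / (2 * (real t + 1))"
      using t by (simp add: divide_simps)
    also have "\<dots> \<le> 1 / (2 * (real M + 1))"
      using t by (simp add: field_simps)
    finally show ?thesis .
  qed
  then have "\<bar>\<Sum>t\<in>{M..<N}. D_sum t \<beta> / (real t * (real t + 1))\<bar>
      \<le> (\<Sum>t\<in>{M..<N}. 1 / (2 * (real M + 1)))"
    by (intro order.trans[OF sum_abs] sum_mono)
  then show ?thesis
    by simp
qed

lemma exp_bounds_of_ln_approx:
  fixes x a z K :: real
  assumes "0 < x" "0 < a" "\<bar>ln x - (ln a + z)\<bar> \<le> K"
  shows "exp (- K) * (a * exp z) \<le> x \<and> x \<le> exp K * (a * exp z)"
proof -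
  have "exp (- K) * (a * exp z) = exp (- K + (ln a + z))"
    using assms(2) by (simp only: exp_add exp_ln)
  also have "\<dots> \<le> exp (ln x)"
    using assms(3) by (simp add: abs_le_iff)
  finally have lower: "exp (- K) * (a * exp z) \<le> x"
    using assms(1) by simp
  have "exp (ln x) \<le> exp (K + (ln a + z))"
    using assms(3) by (simp add: abs_le_iff)
  also have "\<dots> = exp K * (a * exp z)"
    using assms(2) by (simp only: exp_add exp_ln)
  finally show ?thesis
    using lower assms(1) by simp
qed

section \<open>The product at one denominator\<close>

text \<open>
  At the n-th
  convergent, p = p_n, p' = p_(n-1), q = q_n, q' = q_(n-1) and A = \<alpha>_n^+; then \<beta> = \<alpha>_n^-
  and c = c_n.
\<close>

locale convergent_pair =
  fixes p p' q q' :: nat and \<alpha> A :: real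
  assumes q_ge_4: "4 \<le> q" and q'_ge_1: "1 \<le> q'" and q'_less_q: "q' < q"
    and unimodular: "\<bar>int p * int q' - int p' * int q\<bar> = 1"
    and A_gt_1: "1 < A"
    and alpha_eq: "\<alpha> = (real p * A + real p') / (real q * A + real q')"
begin

definition e :: int where "e = int p * int q' - int p' * int q"

lemma e_cases: "e = 1 \<or> e = -1"
  using unimodular by (auto simp: e_def abs_if split: if_splits)

definition \<beta> :: real where "\<beta> = real q' / real q"

definition c :: real where "c = 1 / (A + \<beta>)"

lemma q_pos: "0 < real q"
  using q_ge_4 by simp

lemma beta_bounds: "0 < \<beta>" "\<beta> < 1"
  using q'_ge_1 q'_less_q by (auto simp: \<beta>_def field_simps)

lemma c_bounds: "0 < c" "c < 1" "c * \<beta> \<le> 1 / 2"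
  using A_gt_1 beta_bounds by (auto simp: c_def field_simps)

lemma q_alpha_minus_p: "real q * \<alpha> - real p = - e * c / real q"
proof -
  have den: "0 < real q * A + real q'"
    using q_pos A_gt_1 by (simp add: add_pos_nonneg)
  have "real q * \<alpha> - real p = - (real p * real q' - real p' * real q) / (real q * A + real q')"
    using den by (simp add: alpha_eq field_simps)
  also have "real p * real q' - real p' * real q = e"
    unfolding e_def by simp
  also have "real q * A + real q' = real q * (A + \<beta>)"
    using q_pos by (simp add: \<beta>_def field_simps)
  finally show ?thesis
    by (simp add: c_def)
qed

text \<open>Since p q' \<equiv> e (mod q), s is the inverse of p modulo q.\<close>

definition s :: nat where "s = (if e = 1 then q' else q - q')"

lemma p_s_mod: "(p * s) mod q = 1"
proof -
  have "int (p * s) = (if e = 1 then int p' else int p - int p') * int q + 1"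
  proof (cases "e = 1")
    case True
    then have "s = q'"
      unfolding s_def by simp
    then show ?thesis
      using True by (simp add: e_def)
  next
    case False
    then have "e = -1"
      using e_cases by simp
    moreover have "int (p * s) = int p * (int q - int q')"
      using False q'_less_q by (simp add: s_def of_nat_diff)
    ultimately show ?thesis
      using False by (simp add: e_def algebra_simps)
  qed
  then have "int ((p * s) mod q) = 1 mod int q"
    by (simp add: zmod_int)
  then show ?thesis
    using q_ge_4 by simp
qed

lemma mult_p_s_mod: "(k * (p * s)) mod q = k mod q"
proof -
  have "(k * (p * s)) mod q = (k * ((p * s) mod q)) mod q"
    by (rule mod_mult_right_eq[symmetric])
  then show ?thesis
    by (simp add: p_s_mod)
qed

definition r_of :: "nat \<Rightarrow> nat" where "r_of k = (k * s) mod q"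

lemma r_of_mult_p_mod: "(r_of k * p) mod q = k mod q"
proof -
  have "(r_of k * p) mod q = (k * s * p) mod q"
    unfolding r_of_def by (rule mod_mult_left_eq)
  also have "k * s * p = k * (p * s)"
    by (simp only: mult_ac)
  finally show ?thesis
    by (simp only: mult_p_s_mod)
qed

lemma r_of_in:
  assumes "k \<in> {1..<q}"
  shows "r_of k \<in> {1..<q}"
proof -
  have "r_of k < q"
    using q_ge_4 by (simp add: r_of_def)
  moreover have "r_of k \<noteq> 0"
  proof
    assume "r_of k = 0"
    then have "k mod q = 0"
      using r_of_mult_p_mod[of k] by simp
    then show False
      using assms by simp
  qed
  ultimately show ?thesis
    by simp
qed

lemma r_of_mult_p: "r \<in> {1..<q} \<Longrightarrow> r_of ((r * p) mod q) = r"
proof -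
  assume r: "r \<in> {1..<q}"
  have "r_of ((r * p) mod q) = (r * p * s) mod q"
    unfolding r_of_def by (rule mod_mult_left_eq)
  also have "r * p * s = r * (p * s)"
    by (simp only: mult_ac)
  finally show ?thesis
    using r by (simp only: mult_p_s_mod) simp
qed

lemma bij_betw_r_of: "bij_betw r_of {1..<q} {1..<q}"
proof (rule bij_betw_byWitness[where f' = "\<lambda>r. (r * p) mod q"])
  show "\<forall>k\<in>{1..<q}. (r_of k * p) mod q = k"
    by (simp add: r_of_mult_p_mod)
  show "\<forall>r\<in>{1..<q}. r_of ((r * p) mod q) = r"
    by (simp add: r_of_mult_p)
  show "r_of ` {1..<q} \<subseteq> {1..<q}"
    using r_of_in by blast
  show "(\<lambda>r. (r * p) mod q) ` {1..<q} \<subseteq> {1..<q}"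
  proof safe
    fix r assume r: "r \<in> {1..<q}"
    have "(r * p) mod q \<noteq> 0"
    proof
      assume "(r * p) mod q = 0"
      then have "r = 0"
        using r_of_mult_p[OF r] by (simp add: r_of_def)
      then show False
        using r by simp
    qed
    then show "(r * p) mod q \<in> {1..<q}"
      using q_ge_4 by simp
  qed
qed

definition u :: "nat \<Rightarrow> real" where "u k = real (r_of k) / real q"

definition saw :: "nat \<Rightarrow> real" where "saw k = frac (\<beta> * real k) - 1 / 2"

definition shift :: "nat \<Rightarrow> real" where "shift k = - e * c * u k / real q"

definition y :: "nat \<Rightarrow> real" where "y k = real k / real q + shift k"

lemma u_bounds: "k \<in> {1..<q} \<Longrightarrow> 0 < u k \<and> u k < 1"
  using r_of_in[of k] q_pos by (auto simp: u_def field_simps)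

lemma e_u_eq_saw:
  assumes k: "k \<in> {1..<q}"
  shows "e * u k = saw k + e / 2"
proof -
  define N where "N = (k * s) div q"
  have "k * s = q * N + r_of k"
    by (simp add: N_def r_of_def)
  then have "real k * real s = real q * real N + real (r_of k)"
    using arg_cong[of _ _ real] by fastforce
  then have ks: "real k * real s / real q = real N + u k"
    using q_pos by (simp add: u_def field_simps)
  have "frac (\<beta> * real k) = (if e = 1 then u k else 1 - u k)"
  proof (cases "e = 1")
    case True
    have "s = q'"
      using True unfolding s_def by simp
    then have "\<beta> * real k = real N + u k"
      using ks by (simp add: \<beta>_def mult.commute)
    then show ?thesis
      using True u_bounds[OF k] by (simp add: frac_unique_iff)
  next
    case False
    have "real s = real q - real q'"
      using False q'_less_q unfolding s_def by (simp add: of_nat_diff)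
    from ks[unfolded this] have "real k * real q - real k * real q' = (real N + u k) * real q"
      using q_pos by (simp add: field_simps right_diff_distrib)
    then have "\<beta> * real k = real k - real N - u k"
      using q_pos by (simp add: \<beta>_def field_simps)
    then have "\<beta> * real k - (1 - u k) = of_int (int k - int N - 1)"
      by simp
    then show ?thesis
      using False u_bounds[OF k] by (simp add: frac_unique_iff del: of_int_diff)
  qed
  then show ?thesis
    using e_cases by (auto simp: saw_def)
qed

lemma abs_shift: "k \<in> {1..<q} \<Longrightarrow> \<bar>shift k\<bar> = c * u k / real q"
  using u_bounds[of k] c_bounds e_cases q_pos by (auto simp: shift_def abs_mult)

lemma abs_shift_le: "k \<in> {1..<q} \<Longrightarrow> \<bar>shift k\<bar> \<le> 1 / real q"
  using abs_shift[of k] u_bounds[of k] c_bounds q_pos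
  by (simp add: divide_right_mono mult_le_one less_imp_le)

lemma u_1: "e = 1 \<Longrightarrow> u 1 = \<beta>"
  unfolding u_def r_of_def s_def \<beta>_def using q'_less_q by simp

lemma u_q_minus_1: "e = -1 \<Longrightarrow> u (q - 1) = \<beta>"
proof -
  assume "e = -1"
  obtain d where d: "q = q' + Suc d"
    using q'_less_q less_iff_Suc_add by auto
  have "s = q - q'"
    using \<open>e = -1\<close> unfolding s_def by simp
  then have "(q - 1) * s = q' + q * d"
    unfolding d by (simp add: algebra_simps)
  then have "r_of (q - 1) = q'"
    using q'_less_q by (simp add: r_of_def)
  then show ?thesis
    by (simp add: u_def \<beta>_def)
qed

lemma shift_ge:
  assumes k: "k \<in> {1..<q}"
  shows "- real k / (2 * real q) \<le> shift k"
proof -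
  consider "k = 1" "e = 1" | "2 \<le> k" | "e = -1"
    using k e_cases by (cases "2 \<le> k") auto
  then show ?thesis
  proof cases
    case 1
    then have "u k = \<beta>"
      using u_1 by simp
    then have "shift k = - (c * \<beta>) / real q"
      using 1 by (simp add: shift_def)
    moreover have "c * \<beta> / real q \<le> (1 / 2) / real q"
      using c_bounds(3) q_pos by (intro divide_right_mono) auto
    ultimately show ?thesis
      using 1 by simp
  next
    case 2
    then have "1 / real q \<le> real k / (2 * real q)"
      using q_pos by (simp add: field_simps)
    then show ?thesis
      using abs_shift_le[OF k] by linarith
  next
    case 3
    then have "shift k = c * u k / real q"
      by (simp add: shift_def)
    moreover have "0 \<le> c * u k / real q"
      using u_bounds[OF k] c_bounds q_pos by simp
    moreover have "0 \<le> real k / (2 * real q)"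
      by simp
    ultimately show ?thesis
      by linarith
  qed
qed

lemma shift_le:
  assumes k: "k \<in> {1..<q}"
  shows "shift k \<le> real (q - k) / (2 * real q)"
proof -
  consider "k = q - 1" "e = -1" | "k \<le> q - 2" | "e = 1"
    using k e_cases by (cases "k \<le> q - 2") auto
  then show ?thesis
  proof cases
    case 1
    then have "u k = \<beta>"
      using u_q_minus_1 by simp
    then have "shift k = c * \<beta> / real q"
      using 1 by (simp add: shift_def)
    moreover have "c * \<beta> / real q \<le> (1 / 2) / real q"
      using c_bounds(3) q_pos by (intro divide_right_mono) auto
    ultimately show ?thesis
      using 1 k q_ge_4 by (simp add: of_nat_diff)
  next
    case 2
    then have "1 / real q \<le> real (q - k) / (2 * real q)"
      using q_pos q_ge_4 by (simp add: field_simps of_nat_diff)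
    then show ?thesis
      using abs_shift_le[OF k] by linarith
  next
    case 3
    then have "shift k = - (c * u k / real q)"
      by (simp add: shift_def)
    moreover have "0 \<le> c * u k / real q"
      using u_bounds[OF k] c_bounds q_pos by simp
    moreover have "0 \<le> real (q - k) / (2 * real q)"
      by simp
    ultimately show ?thesis
      by linarith
  qed
qed

lemma y_bounds:
  assumes "k \<in> {1..<q}"
  shows "real k / (2 * real q) \<le> y k" "y k \<le> 1 - real (q - k) / (2 * real q)"
proof -
  have "real k / real q = 1 - real (q - k) / real q"
    using assms q_pos by (simp add: of_nat_diff field_simps)
  then show "real k / (2 * real q) \<le> y k" "y k \<le> 1 - real (q - k) / (2 * real q)"
    using shift_ge[OF assms] shift_le[OF assms] by (simp_all add: y_def)
qed

lemma y_in_unit: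
  assumes "k \<in> {1..<q}"
  shows "0 < y k \<and> y k < 1"
proof -
  have "0 < real k / (2 * real q)" "0 < real (q - k) / (2 * real q)"
    using assms q_pos by auto
  then show ?thesis
    using y_bounds[OF assms] by linarith
qed

lemma r_of_mult_alpha:
  assumes "k \<in> {1..<q}"
  shows "real (r_of k) * \<alpha> = real ((r_of k * p) div q) + y k"
proof -
  define N where "N = (r_of k * p) div q"
  have "(r_of k * p) mod q = k"
    using r_of_mult_p_mod[of k] assms by simp
  then have "r_of k * p = q * N + k"
    unfolding N_def by (metis mult_div_mod_eq)
  then have rp: "real (r_of k) * real p = real q * real N + real k"
    using arg_cong[of _ _ real] by fastforce
  have alpha: "\<alpha> = (real p - e * c / real q) / real q"
    using q_alpha_minus_p q_pos by (simp add: field_simps)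
  have "real (r_of k) * \<alpha> = (real (r_of k) * real p - e * c * u k) / real q"
    unfolding alpha using q_pos by (simp add: u_def field_simps)
  also have "\<dots> = real N + y k"
    unfolding rp using q_pos by (simp add: y_def shift_def field_simps)
  finally show ?thesis
    by (simp add: N_def)
qed

lemma abs_2_sin_r_of_alpha:
  assumes "k \<in> {1..<q}"
  shows "\<bar>2 * sin (pi * real (r_of k) * \<alpha>)\<bar> = 2 * sin (pi * y k)"
proof -
  have "pi * real (r_of k) * \<alpha> = pi * y k + pi * real ((r_of k * p) div q)"
    using r_of_mult_alpha[OF assms] by (simp add: algebra_simps)
  then have "\<bar>sin (pi * real (r_of k) * \<alpha>)\<bar> = \<bar>sin (pi * y k)\<bar>"
    by (simp only: abs_sin_add_pi_nat)
  moreover have "0 < sin (pi * y k)"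
    using y_in_unit[OF assms] by (intro sin_gt_zero) auto
  ultimately show ?thesis
    by (simp add: abs_mult)
qed

lemma sin_pi_c_div_q_bounds:
  "0 < pi * c / real q" "4 * c / real q \<le> 2 * sin (pi * c / real q)"
  "2 * sin (pi * c / real q) \<le> 2 * pi * c / real q"
proof -
  show pos: "0 < pi * c / real q"
    using c_bounds q_pos by simp
  have "pi * c / real q \<le> pi / 2"
    using c_bounds q_ge_4 by (simp add: field_simps)
  then have "2 * (pi * c / real q) / pi \<le> sin (pi * c / real q)"
    using pos by (intro jordan_inequality) auto
  then show "4 * c / real q \<le> 2 * sin (pi * c / real q)"
    by simp
  show "2 * sin (pi * c / real q) \<le> 2 * pi * c / real q"
    using sin_x_le_x[of "pi * c / real q"] pos by simp
qed

lemma abs_2_sin_q_alpha: "\<bar>2 * sin (pi * real q * \<alpha>)\<bar> = 2 * sin (pi * c / real q)"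
proof -
  have "real q * \<alpha> = real p - e * c / real q"
    using q_alpha_minus_p by linarith
  then have "pi * real q * \<alpha> = pi * (real p - e * c / real q)"
    by (simp add: mult.assoc)
  also have "\<dots> = - (pi * e * c / real q) + pi * real p"
    by (simp add: algebra_simps)
  finally have "pi * real q * \<alpha> = - (pi * e * c / real q) + pi * real p" .
  then have "\<bar>sin (pi * real q * \<alpha>)\<bar> = \<bar>sin (pi * c / real q)\<bar>"
    using e_cases by (auto simp only: abs_sin_add_pi_nat) auto
  moreover have "0 < sin (pi * c / real q)"
    using sin_pi_c_div_q_bounds c_bounds q_pos by (smt (verit) divide_pos_pos)
  ultimately show ?thesis
    by (simp add: abs_mult)
qed

lemma P_prod_eq: "P_prod q \<alpha> = 2 * sin (pi * c / real q) * (\<Prod>k\<in>{1..<q}. 2 * sin (pi * y k))"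
proof -
  have "{1..q} = insert q {1..<q}"
    using q_ge_4 by auto
  then have "P_prod q \<alpha>
      = \<bar>2 * sin (pi * real q * \<alpha>)\<bar> * (\<Prod>r\<in>{1..<q}. \<bar>2 * sin (pi * real r * \<alpha>)\<bar>)"
    by (simp add: P_prod_def)
  also have "(\<Prod>r\<in>{1..<q}. \<bar>2 * sin (pi * real r * \<alpha>)\<bar>)
      = (\<Prod>k\<in>{1..<q}. \<bar>2 * sin (pi * real (r_of k) * \<alpha>)\<bar>)"
    using prod.reindex_bij_betw[OF bij_betw_r_of, of "\<lambda>r. \<bar>2 * sin (pi * real r * \<alpha>)\<bar>"] by simp
  also have "\<dots> = (\<Prod>k\<in>{1..<q}. 2 * sin (pi * y k))"
    by (intro prod.cong refl abs_2_sin_r_of_alpha)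
  finally show ?thesis
    by (simp only: abs_2_sin_q_alpha)
qed

lemma ln_P_prod_eq:
  "0 < P_prod q \<alpha>"
  "ln (P_prod q \<alpha>) = ln (2 * sin (pi * c / real q)) + (\<Sum>k\<in>{1..<q}. log_sin (y k))"
proof -
  have pos: "0 < 2 * sin (pi * y k)" if "k \<in> {1..<q}" for k
    using y_in_unit[OF that] by (auto intro!: sin_gt_zero)
  have pos_c: "0 < 2 * sin (pi * c / real q)"
    using sin_pi_c_div_q_bounds c_bounds q_pos by (smt (verit) divide_pos_pos)
  have pos_prod: "0 < (\<Prod>k\<in>{1..<q}. 2 * sin (pi * y k))"
    using pos by (intro prod_pos) auto
  show "0 < P_prod q \<alpha>"
    unfolding P_prod_eq using pos_c pos_prod by simp
  have "ln (P_prod q \<alpha>) = ln (2 * sin (pi * c / real q)) + ln (\<Prod>k\<in>{1..<q}. 2 * sin (pi * y k))"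
    unfolding P_prod_eq using pos_c pos_prod by (rule ln_mult_pos)
  also have "ln (\<Prod>k\<in>{1..<q}. 2 * sin (pi * y k)) = (\<Sum>k\<in>{1..<q}. log_sin (y k))"
    unfolding log_sin_def using pos by (intro ln_prod) (auto simp: less_imp_neq[symmetric])
  finally show "ln (P_prod q \<alpha>) = ln (2 * sin (pi * c / real q)) + (\<Sum>k\<in>{1..<q}. log_sin (y k))" .
qed

lemma taylor_error_le:
  assumes k: "k \<in> {1..<q}"
  shows "\<bar>log_sin (y k) - log_sin (real k / real q) - pi * cot (pi * real k / real q) * shift k\<bar>
    \<le> pi\<^sup>2 * (1 / (real k)\<^sup>2 + 1 / (real (q - k))\<^sup>2)"
proof -
  define d where "d = min k (q - k)"
  define m where "m = real d / (2 * real q)"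
  have d: "1 \<le> d" "d \<le> k" "d \<le> q - k"
    using k by (auto simp: d_def)
  have "real k / real q = 1 - real (q - k) / real q"
    using k q_pos by (simp add: of_nat_diff field_simps)
  moreover have "real d / (2 * real q) \<le> real k / (2 * real q)" "real d / (2 * real q) \<le> real (q - k) / (2 * real q)"
    "real k / (2 * real q) \<le> real k / real q" "real (q - k) / (2 * real q) \<le> real (q - k) / real q"
    using d q_pos by (simp_all add: divide_right_mono field_simps)
  ultimately have in_m: "real k / real q \<in> {m..1-m}" "y k \<in> {m..1-m}"
    using y_bounds[OF k] by (auto simp: m_def)
  have "0 < m"
    using d q_pos by (simp add: m_def)
  have "\<bar>log_sin (y k) - log_sin (real k / real q) - pi * cot (pi * real k / real q) * shift k\<bar>
      \<le> pi\<^sup>2 / (4 * m\<^sup>2) * (shift k)\<^sup>2"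
    using log_sin_taylor[OF \<open>0 < m\<close> in_m] by (simp add: y_def)
  also have "\<dots> \<le> pi\<^sup>2 / (4 * m\<^sup>2) * (1 / real q)\<^sup>2"
    using power_mono[OF abs_shift_le[OF k] abs_ge_zero, of 2] by (intro mult_left_mono) auto
  also have "\<dots> = pi\<^sup>2 * (1 / (real d)\<^sup>2)"
    using q_pos d by (simp add: m_def field_simps)
  also have "\<dots> \<le> pi\<^sup>2 * (1 / (real k)\<^sup>2 + 1 / (real (q - k))\<^sup>2)"
    by (intro mult_left_mono) (auto simp: d_def min_def)
  finally show ?thesis .
qed

lemma taylor_sum_bound:
  "\<bar>(\<Sum>k\<in>{1..<q}. log_sin (y k)) - (\<Sum>k\<in>{1..<q}. log_sin (real k / real q))
     - (\<Sum>k\<in>{1..<q}. pi * cot (pi * real k / real q) * shift k)\<bar> \<le> 4 * pi\<^sup>2"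
proof -
  have "\<bar>(\<Sum>k\<in>{1..<q}. log_sin (y k)) - (\<Sum>k\<in>{1..<q}. log_sin (real k / real q))
     - (\<Sum>k\<in>{1..<q}. pi * cot (pi * real k / real q) * shift k)\<bar>
      \<le> (\<Sum>k\<in>{1..<q}. pi\<^sup>2 * (1 / (real k)\<^sup>2 + 1 / (real (q - k))\<^sup>2))"
    unfolding sum_subtractf[symmetric] by (intro order.trans[OF sum_abs] sum_mono taylor_error_le)
  also have "\<dots> = pi\<^sup>2 * ((\<Sum>k\<in>{1..<q}. 1 / (real k)\<^sup>2) + (\<Sum>k\<in>{1..<q}. 1 / (real (q - k))\<^sup>2))"
    by (simp add: sum.distrib distrib_left sum_distrib_left)
  also have "(\<Sum>k\<in>{1..<q}. 1 / (real (q - k))\<^sup>2) = (\<Sum>k\<in>{1..<q}. 1 / (real k)\<^sup>2)"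
    by (rule sum_reflect)
  also have "pi\<^sup>2 * ((\<Sum>k\<in>{1..<q}. 1 / (real k)\<^sup>2) + (\<Sum>k\<in>{1..<q}. 1 / (real k)\<^sup>2))
      = 2 * pi\<^sup>2 * (\<Sum>k\<in>{1..<q}. 1 / (real k)\<^sup>2)"
    by simp
  also have "\<dots> \<le> 2 * pi\<^sup>2 * 2"
    by (intro mult_left_mono sum_inverse_squares_le) auto
  finally show ?thesis
    by simp
qed

lemma linear_term_eq:
  "(\<Sum>k\<in>{1..<q}. pi * cot (pi * real k / real q) * shift k)
    = - (c / real q) * (\<Sum>k\<in>{1..<q}. pi * cot (pi * real k / real q) * saw k)"
proof -
  have "(\<Sum>k\<in>{1..<q}. pi * cot (pi * real k / real q) * shift k)
      = (\<Sum>k\<in>{1..<q}. - (c / real q) * (pi * cot (pi * real k / real q) * saw k)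
          - (c / real q) * (e / 2) * pi * cot (pi * real k / real q))"
  proof (rule sum.cong[OF refl])
    fix k assume "k \<in> {1..<q}"
    then have shift: "shift k = - (c / real q) * (saw k + e / 2)"
      by (simp add: shift_def flip: e_u_eq_saw)
    show "pi * cot (pi * real k / real q) * shift k
        = - (c / real q) * (pi * cot (pi * real k / real q) * saw k) - (c / real q) * (e / 2) * pi * cot (pi * real k / real q)"
      unfolding shift by (simp add: algebra_simps)
  qed
  also have "\<dots> = - (c / real q) * (\<Sum>k\<in>{1..<q}. pi * cot (pi * real k / real q) * saw k)
      - (c / real q) * (e / 2) * pi * (\<Sum>k\<in>{1..<q}. cot (pi * real k / real q))"
    by (simp add: sum_subtractf sum_distrib_left mult.assoc)
  also have "(\<Sum>k\<in>{1..<q}. cot (pi * real k / real q)) = 0"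
    by (rule sum_cot_grid)
  finally show ?thesis
    by simp
qed

lemma abs_saw_le: "\<bar>saw k\<bar> \<le> 1 / 2"
  unfolding saw_def abs_le_iff using frac_ge_0[of "\<beta> * real k"] frac_lt_1[of "\<beta> * real k"] by linarith

lemma saw_reflect:
  assumes k: "k \<in> {1..<q}"
  shows "saw (q - k) = - saw k"
proof -
  have "frac (\<beta> * real k) = e * u k + (1 - e) / 2"
    using e_u_eq_saw[OF k] by (simp add: saw_def field_simps)
  then have "frac (\<beta> * real k) \<noteq> 0"
    using e_cases u_bounds[OF k] by auto
  then have "\<beta> * real k \<notin> \<int>"
    by simp
  have "\<beta> * real (q - k) = real q' + - (\<beta> * real k)"
    using k q_pos by (simp add: of_nat_diff \<beta>_def field_simps)
  then have "frac (\<beta> * real (q - k)) = frac (real q' + - (\<beta> * real k))"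
    by (simp only:)
  also have "\<dots> = frac (- (\<beta> * real k))"
    by (rule frac_add_int_left) simp
  finally have "frac (\<beta> * real (q - k)) = frac (- (\<beta> * real k))" .
  with \<open>\<beta> * real k \<notin> \<int>\<close> show ?thesis
    by (simp add: saw_def frac_neg)
qed

lemma sum_saw_reflect:
  "(\<Sum>k\<in>{1..<q}. real q / real (q - k) * saw k) = - (\<Sum>k\<in>{1..<q}. real q / real k * saw k)"
proof -
  have "(\<Sum>k\<in>{1..<q}. real q / real (q - k) * saw k) = (\<Sum>k\<in>{1..<q}. real q / real k * saw (q - k))"
    using sum_reflect[where g = "\<lambda>k. real q / real k * saw (q - k)" and q = q]
    by (simp add: diff_diff_cancel)
  also have "\<dots> = (\<Sum>k\<in>{1..<q}. - (real q / real k * saw k))"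
    by (intro sum.cong refl) (simp add: saw_reflect)
  finally show ?thesis
    by (simp add: sum_negf)
qed

definition weighted_saw_sum :: real where
  "weighted_saw_sum = (\<Sum>k\<in>{1..<q}. saw k / real k)"

lemma cot_saw_sum_approx:
  "\<bar>(\<Sum>k\<in>{1..<q}. pi * cot (pi * real k / real q) * saw k) - 2 * real q * weighted_saw_sum\<bar> \<le> 9 * real q"
proof -
  define E where "E k = pi * cot (pi * real k / real q) - real q / real k + real q / real (q - k)" for k
  have abs_E: "\<bar>E k\<bar> \<le> 18" if k: "k \<in> {1..<q}" for k
  proof -
    have "0 < real k / real q" "real k / real q < 1"
      using k q_pos by auto
    moreover have "1 - real k / real q = real (q - k) / real q"
      using k q_pos by (simp add: of_nat_diff field_simps)
    ultimately show ?thesis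
      using pi_cot_approx[of "real k / real q"] by (simp add: E_def)
  qed
  have W: "(\<Sum>k\<in>{1..<q}. real q / real k * saw k) = real q * weighted_saw_sum"
    by (simp add: weighted_saw_sum_def sum_distrib_left)
  have "pi * cot (pi * real k / real q) * saw k = real q / real k * saw k - real q / real (q - k) * saw k + E k * saw k" for k
    by (simp add: E_def algebra_simps)
  then have "(\<Sum>k\<in>{1..<q}. pi * cot (pi * real k / real q) * saw k)
      = (\<Sum>k\<in>{1..<q}. real q / real k * saw k) - (\<Sum>k\<in>{1..<q}. real q / real (q - k) * saw k)
        + (\<Sum>k\<in>{1..<q}. E k * saw k)"
    by (simp only: sum.distrib sum_subtractf)
  also have "\<dots> = 2 * real q * weighted_saw_sum + (\<Sum>k\<in>{1..<q}. E k * saw k)"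
    unfolding sum_saw_reflect W by simp
  finally have "(\<Sum>k\<in>{1..<q}. pi * cot (pi * real k / real q) * saw k) - 2 * real q * weighted_saw_sum
      = (\<Sum>k\<in>{1..<q}. E k * saw k)"
    by simp
  also have "\<bar>\<dots>\<bar> \<le> (\<Sum>k\<in>{1..<q}. 18 * (1 / 2))"
    using abs_E abs_saw_le
    by (intro order.trans[OF sum_abs] sum_mono, unfold abs_mult, intro mult_mono) auto
  also have "\<dots> \<le> 9 * real q"
    by simp
  finally show ?thesis .
qed

lemma linear_term_approx:
  "\<bar>(\<Sum>k\<in>{1..<q}. pi * cot (pi * real k / real q) * shift k) + 2 * c * weighted_saw_sum\<bar> \<le> 9"
proof -
  have "(\<Sum>k\<in>{1..<q}. pi * cot (pi * real k / real q) * shift k) + 2 * c * weighted_saw_sum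
      = - (c / real q) * ((\<Sum>k\<in>{1..<q}. pi * cot (pi * real k / real q) * saw k) - 2 * real q * weighted_saw_sum)"
    unfolding linear_term_eq using q_pos by (simp add: field_simps)
  also have "\<bar>\<dots>\<bar> = (c / real q)
      * \<bar>(\<Sum>k\<in>{1..<q}. pi * cot (pi * real k / real q) * saw k) - 2 * real q * weighted_saw_sum\<bar>"
    using c_bounds q_pos by (simp add: abs_mult)
  also have "\<dots> \<le> (c / real q) * (9 * real q)"
    using cot_saw_sum_approx c_bounds q_pos by (intro mult_left_mono) auto
  also have "\<dots> \<le> 9"
    using c_bounds q_pos by simp
  finally show ?thesis .
qed

definition D_series :: real where
  "D_series = (\<Sum>t\<in>{1..<(q - 1) div 2}. D_sum t \<beta> / (real t * (real t + 1)))"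

lemma weighted_saw_sum_approx: "\<bar>weighted_saw_sum - D_series\<bar> \<le> 1"
proof -
  define M where "M = (q - 1) div 2"
  define f where "f t = D_sum t \<beta> / (real t * (real t + 1))" for t
  have M: "1 \<le> M" "M \<le> q - 1" "q - 1 - M \<le> M + 1"
    using q_ge_4 by (auto simp: M_def)
  have "{1..<q} = {1..q - 1}"
    using q_ge_4 by auto
  then have "weighted_saw_sum = (\<Sum>k=1..q - 1. saw k / real k)"
    by (simp add: weighted_saw_sum_def)
  also have "\<dots> = (\<Sum>t\<in>{1..<q - 1}. f t) + D_sum (q - 1) \<beta> / real (q - 1)"
    unfolding sum_divide_by_parts by (simp add: f_def D_sum_def saw_def)
  also have "(\<Sum>t\<in>{1..<q - 1}. f t) = D_series + (\<Sum>t\<in>{M..<q - 1}. f t)"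
    using M by (simp add: D_series_def M_def f_def sum.atLeastLessThan_concat)
  finally have "weighted_saw_sum - D_series = (\<Sum>t\<in>{M..<q - 1}. f t) + D_sum (q - 1) \<beta> / real (q - 1)"
    by simp
  then have "\<bar>weighted_saw_sum - D_series\<bar>
      \<le> \<bar>\<Sum>t\<in>{M..<q - 1}. f t\<bar> + \<bar>D_sum (q - 1) \<beta> / real (q - 1)\<bar>"
    by (simp only: abs_triangle_ineq)
  moreover have "\<bar>\<Sum>t\<in>{M..<q - 1}. f t\<bar> \<le> 1 / 2"
  proof -
    have "\<bar>\<Sum>t\<in>{M..<q - 1}. f t\<bar> \<le> real (q - 1 - M) / (2 * (real M + 1))"
      unfolding f_def using abs_sum_D_sum_tail_le[OF M(1)] .
    also have "\<dots> \<le> 1 / 2"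
      using M(3) by (simp add: field_simps)
    finally show ?thesis .
  qed
  moreover have "\<bar>D_sum (q - 1) \<beta> / real (q - 1)\<bar> \<le> 1 / 2"
    using abs_D_sum_le[of "q - 1" \<beta>] q_ge_4 by (simp add: abs_divide field_simps)
  ultimately show ?thesis
    by linarith
qed

lemma ln_2_sin_pi_c_div_q_approx: "\<bar>ln (2 * sin (pi * c / real q)) - (ln c - ln (real q))\<bar> \<le> 2 * pi"
proof -
  have pos: "0 < 4 * c / real q"
    using c_bounds q_pos by simp
  have "ln (4 * c / real q) \<le> ln (2 * sin (pi * c / real q))"
    using sin_pi_c_div_q_bounds(2) pos by simp
  moreover have "ln (2 * sin (pi * c / real q)) \<le> ln (2 * pi * c / real q)"
    using sin_pi_c_div_q_bounds(2,3) pos by simp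
  moreover have "ln (4 * c / real q) = ln 4 + ln c - ln (real q)"
    "ln (2 * pi * c / real q) = ln (2 * pi) + ln c - ln (real q)"
    using c_bounds q_pos by (simp_all add: ln_div ln_mult)
  moreover have "0 \<le> ln (4::real)" "ln (2 * pi) \<le> 2 * pi - 1"
    by (simp_all add: ln_le_minus_one)
  ultimately show ?thesis
    by linarith
qed

lemma ln_P_prod_approx: "\<bar>ln (P_prod q \<alpha>) - (ln c + - 2 * c * D_series)\<bar> \<le> 100"
proof -
  define Lin where "Lin = (\<Sum>k\<in>{1..<q}. pi * cot (pi * real k / real q) * shift k)"
  have "ln (P_prod q \<alpha>) - (ln c + - 2 * c * D_series)
      = (ln (2 * sin (pi * c / real q)) - (ln c - ln (real q)))
        + ((\<Sum>k\<in>{1..<q}. log_sin (y k)) - (\<Sum>k\<in>{1..<q}. log_sin (real k / real q)) - Lin)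
        + (Lin + 2 * c * weighted_saw_sum) - 2 * c * (weighted_saw_sum - D_series)"
    using ln_P_prod_eq(2) sum_log_sin_grid[of q] q_ge_4 by (simp add: algebra_simps)
  moreover have "\<bar>2 * c * (weighted_saw_sum - D_series)\<bar> \<le> 2"
    using weighted_saw_sum_approx c_bounds by (simp add: abs_mult mult_le_one)
  ultimately have "\<bar>ln (P_prod q \<alpha>) - (ln c + - 2 * c * D_series)\<bar> \<le> 2 * pi + 4 * pi\<^sup>2 + 9 + 2"
    using ln_2_sin_pi_c_div_q_approx taylor_sum_bound linear_term_approx
    unfolding Lin_def by linarith
  also have "\<dots> \<le> 2 * 4 + 4 * 4\<^sup>2 + 9 + 2"
    using pi_less_4 by (intro add_mono mult_left_mono power_mono) auto
  finally show ?thesis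
    by simp
qed

lemma P_prod_bounds:
  "exp (- 100) * (c * exp (- 2 * c * D_series)) \<le> P_prod q \<alpha>
    \<and> P_prod q \<alpha> \<le> exp 100 * (c * exp (- 2 * c * D_series))"
  using exp_bounds_of_ln_approx[OF ln_P_prod_eq(1) c_bounds(1) ln_P_prod_approx] by simp

end

section \<open>Continued fractions\<close>

lemma gauss_iterate_bounds:
  assumes "0 < \<alpha>" "\<alpha> < 1" "\<alpha> \<notin> \<rat>"
  shows "0 < (gauss ^^ k) \<alpha> \<and> (gauss ^^ k) \<alpha> < 1 \<and> (gauss ^^ k) \<alpha> \<notin> \<rat>"
proof (induction k)
  case (Suc k)
  define x where "x = (gauss ^^ k) \<alpha>"
  have "1 / x \<notin> \<rat>"
    using Suc by (metis Rats_inverse_iff inverse_eq_divide x_def)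
  then have "frac (1 / x) \<notin> \<rat>"
    by simp
  moreover from this have "frac (1 / x) \<noteq> 0"
    by (metis Rats_0)
  moreover have "(gauss ^^ Suc k) \<alpha> = frac (1 / x)"
    by (simp add: x_def gauss_def)
  ultimately show ?case
    using frac_ge_0[of "1 / x"] frac_lt_1[of "1 / x"] by simp
qed (use assms in simp)

fun cf_p :: "real \<Rightarrow> nat \<Rightarrow> nat" where
  "cf_p \<alpha> 0 = 1"
| "cf_p \<alpha> (Suc 0) = 0"
| "cf_p \<alpha> (Suc (Suc n)) = cf_a \<alpha> (Suc n) * cf_p \<alpha> (Suc n) + cf_p \<alpha> n"

lemma cf_det:
  "int (cf_p \<alpha> (Suc n)) * int (cf_q \<alpha> n) - int (cf_p \<alpha> n) * int (cf_q \<alpha> (Suc n)) = (-1) ^ Suc n"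
proof (induction n)
  case (Suc n)
  have "int (cf_p \<alpha> (Suc (Suc n))) * int (cf_q \<alpha> (Suc n)) - int (cf_p \<alpha> (Suc n)) * int (cf_q \<alpha> (Suc (Suc n)))
      = - (int (cf_p \<alpha> (Suc n)) * int (cf_q \<alpha> n) - int (cf_p \<alpha> n) * int (cf_q \<alpha> (Suc n)))"
    by (simp add: algebra_simps)
  then show ?case
    using Suc.IH by simp
qed simp

locale irrational_cf =
  fixes \<alpha> :: real
  assumes pos: "0 < \<alpha>" and less_1: "\<alpha> < 1" and irrational: "\<alpha> \<notin> \<rat>"
begin

lemma gauss_iterate: "0 < (gauss ^^ k) \<alpha>" "(gauss ^^ k) \<alpha> < 1"
  using gauss_iterate_bounds[OF pos less_1 irrational] by auto

lemma floor_inverse_gauss_iterate_ge_1: "1 \<le> \<lfloor>1 / (gauss ^^ k) \<alpha>\<rfloor>"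
  using gauss_iterate[of k] by (simp add: le_floor_iff field_simps)

lemma cf_a_Suc: "real (cf_a \<alpha> (Suc k)) = \<lfloor>1 / (gauss ^^ k) \<alpha>\<rfloor>"
proof -
  have "cf_a \<alpha> (Suc k) = nat \<lfloor>1 / (gauss ^^ k) \<alpha>\<rfloor>"
    by (simp add: cf_a_def)
  moreover have "0 \<le> \<lfloor>1 / (gauss ^^ k) \<alpha>\<rfloor>"
    using floor_inverse_gauss_iterate_ge_1[of k] by linarith
  ultimately show ?thesis
    by (simp only: of_nat_nat)
qed

lemma cf_a_ge_1: "1 \<le> cf_a \<alpha> (Suc k)"
proof -
  have "1 \<le> real (cf_a \<alpha> (Suc k))"
    unfolding cf_a_Suc using floor_inverse_gauss_iterate_ge_1[of k] by linarith
  then show ?thesis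
    by simp
qed

lemma alpha_plus_Suc:
  "alpha_plus \<alpha> (Suc k) = real (cf_a \<alpha> (Suc k)) + 1 / alpha_plus \<alpha> (Suc (Suc k))"
  by (simp add: alpha_plus_def cf_a_Suc gauss_def frac_def)

lemma alpha_plus_gt_1: "1 < alpha_plus \<alpha> (Suc k)"
  using gauss_iterate[of k] by (simp add: alpha_plus_def field_simps)

lemma cf_q_Suc_Suc_ge: "cf_q \<alpha> (Suc n) + cf_q \<alpha> n \<le> cf_q \<alpha> (Suc (Suc n))"
  using cf_a_ge_1[of n] by simp

lemma cf_q_Suc_ge: "max 1 n \<le> cf_q \<alpha> (Suc n)"
proof (induction n rule: induct_nat_012)
  case (ge2 n)
  then show ?case
    using cf_q_Suc_Suc_ge[of "Suc n"] unfolding max_def by (simp del: cf_q.simps split: if_splits)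
qed (use cf_a_ge_1[of 0] in simp_all)

lemma cf_q_less_Suc: "2 \<le> n \<Longrightarrow> cf_q \<alpha> n < cf_q \<alpha> (Suc n)"
  using cf_q_Suc_Suc_ge[of "n - 1"] cf_q_Suc_ge[of "n - 2"] by (simp add: numeral_2_eq_2 Suc_diff_Suc)

lemma alpha_eq_mobius_alpha_plus:
  "\<alpha> = (real (cf_p \<alpha> (Suc m)) * alpha_plus \<alpha> (Suc m) + real (cf_p \<alpha> m))
      / (real (cf_q \<alpha> (Suc m)) * alpha_plus \<alpha> (Suc m) + real (cf_q \<alpha> m))"
proof (induction m)
  case 0
  then show ?case
    by (simp add: alpha_plus_def)
next
  case (Suc m)
  define A where "A = alpha_plus \<alpha> (Suc (Suc m))"
  define a where "a = real (cf_a \<alpha> (Suc m))"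
  have "A > 1"
    using alpha_plus_gt_1 by (simp add: A_def)
  have "\<alpha> = (real (cf_p \<alpha> (Suc m)) * (a + 1 / A) + real (cf_p \<alpha> m))
      / (real (cf_q \<alpha> (Suc m)) * (a + 1 / A) + real (cf_q \<alpha> m))"
    using Suc.IH unfolding alpha_plus_Suc[of m] A_def a_def .
  also have "\<dots> = ((real (cf_p \<alpha> (Suc m)) * (a + 1 / A) + real (cf_p \<alpha> m)) * A)
      / ((real (cf_q \<alpha> (Suc m)) * (a + 1 / A) + real (cf_q \<alpha> m)) * A)"
    using \<open>A > 1\<close> by simp
  also have "\<dots> = (real (cf_p \<alpha> (Suc (Suc m))) * A + real (cf_p \<alpha> (Suc m)))
      / (real (cf_q \<alpha> (Suc (Suc m))) * A + real (cf_q \<alpha> (Suc m)))"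
    using \<open>A > 1\<close> by (simp add: a_def algebra_simps)
  finally show ?case
    by (simp add: A_def)
qed

lemma alpha_minus_Suc: "alpha_minus \<alpha> (Suc m) = real (cf_q \<alpha> m) / real (cf_q \<alpha> (Suc m))"
proof (induction m)
  case 0
  then show ?case
    by (simp add: alpha_minus_def)
next
  case (Suc m)
  have "alpha_minus \<alpha> (Suc (Suc m)) = 1 / (real (cf_a \<alpha> (Suc m)) + alpha_minus \<alpha> (Suc m))"
    by (simp add: alpha_minus_def)
  also have "\<dots> = 1 / (real (cf_a \<alpha> (Suc m)) + real (cf_q \<alpha> m) / real (cf_q \<alpha> (Suc m)))"
    by (simp only: Suc.IH)
  also have "\<dots> = real (cf_q \<alpha> (Suc m)) / real (cf_q \<alpha> (Suc (Suc m)))"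
    using cf_q_Suc_ge[of m] by (simp add: field_simps)
  finally show ?case .
qed

lemma convergent_pair_cf:
  assumes "5 \<le> n"
  shows "convergent_pair (cf_p \<alpha> n) (cf_p \<alpha> (n - 1)) (cf_q \<alpha> n) (cf_q \<alpha> (n - 1)) \<alpha> (alpha_plus \<alpha> n)"
proof -
  obtain m where n: "n = Suc m" and m: "4 \<le> m"
    using assms by (cases n) auto
  show ?thesis
  proof
    show "4 \<le> cf_q \<alpha> n"
      using cf_q_Suc_ge[of m] m n by simp
    show "1 \<le> cf_q \<alpha> (n - 1)"
      using cf_q_Suc_ge[of "m - 1"] m n by (simp add: Suc_diff_Suc)
    show "cf_q \<alpha> (n - 1) < cf_q \<alpha> n"
      using cf_q_less_Suc[of m] m n by simp
    show "\<bar>int (cf_p \<alpha> n) * int (cf_q \<alpha> (n - 1)) - int (cf_p \<alpha> (n - 1)) * int (cf_q \<alpha> n)\<bar> = 1"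
      using cf_det[of \<alpha> m] n by simp
    show "1 < alpha_plus \<alpha> n"
      using alpha_plus_gt_1 n by simp
    show "\<alpha> = (real (cf_p \<alpha> n) * alpha_plus \<alpha> n + real (cf_p \<alpha> (n - 1)))
        / (real (cf_q \<alpha> n) * alpha_plus \<alpha> n + real (cf_q \<alpha> (n - 1)))"
      using alpha_eq_mobius_alpha_plus[of m] n by simp
  qed
qed

lemma eventually_P_prod_bounds:
  "\<forall>\<^sub>F n in sequentially.
     exp (- 100) * (cf_c \<alpha> n * exp (- 2 * cf_c \<alpha> n *
        (\<Sum>t\<in>{1..<M_idx \<alpha> n}. D_sum t (alpha_minus \<alpha> n) / (real t * (real t + 1)))))
       \<le> P_prod (cf_q \<alpha> n) \<alpha> \<and>
     P_prod (cf_q \<alpha> n) \<alpha> \<le>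
     exp 100 * (cf_c \<alpha> n * exp (- 2 * cf_c \<alpha> n *
        (\<Sum>t\<in>{1..<M_idx \<alpha> n}. D_sum t (alpha_minus \<alpha> n) / (real t * (real t + 1)))))"
proof (rule eventually_sequentiallyI[of 5], goal_cases)
  case (1 n)
  interpret C: convergent_pair "cf_p \<alpha> n" "cf_p \<alpha> (n - 1)" "cf_q \<alpha> n" "cf_q \<alpha> (n - 1)" \<alpha> "alpha_plus \<alpha> n"
    using 1 by (rule convergent_pair_cf)
  have "C.\<beta> = alpha_minus \<alpha> n"
    unfolding C.\<beta>_def using alpha_minus_Suc[of "n - 1"] 1 by simp
  then have "C.c = cf_c \<alpha> n"
    "C.D_series = (\<Sum>t\<in>{1..<M_idx \<alpha> n}. D_sum t (alpha_minus \<alpha> n) / (real t * (real t + 1)))"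
    unfolding C.c_def cf_c_def C.D_series_def M_idx_def by simp_all
  with C.P_prod_bounds show ?case
    by simp
qed

end

theorem theorem1p1:
  fixes \<alpha> :: real
  assumes "0 < \<alpha>" and "\<alpha> < 1" and "\<alpha> \<notin> \<rat>"
  shows "\<exists>c C. 0 < c \<and> c \<le> C \<and>
    (\<forall>\<^sub>F n in sequentially.
       c * (cf_c \<alpha> n * exp (- 2 * cf_c \<alpha> n *
          (\<Sum>t\<in>{1..<M_idx \<alpha> n}. D_sum t (alpha_minus \<alpha> n) / (real t * (real t + 1)))))
         \<le> P_prod (cf_q \<alpha> n) \<alpha> \<and>
       P_prod (cf_q \<alpha> n) \<alpha> \<le>
       C * (cf_c \<alpha> n * exp (- 2 * cf_c \<alpha> n *
          (\<Sum>t\<in>{1..<M_idx \<alpha> n}. D_sum t (alpha_minus \<alpha> n) / (real t * (real t + 1))))))"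
proof -
  interpret irrational_cf \<alpha>
    using assms by unfold_locales
  have "0 < exp (- 100 :: real)" "exp (- 100 :: real) \<le> exp 100"
    by simp_all
  with eventually_P_prod_bounds show ?thesis
    by blast
qed

end
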